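(* Let $k\ge 1$, let $(\Lambda,d)$ be a $k$-graph, and let $p\in\mathbb{N}^k$. Then the dual $(p\Lambda,d_p)$ (defined in the context) is a $k$-graph.
   Context: A $k$-graph is a pair $(\Lambda,d)$ where $\Lambda$ is a countable category and $d:\Lambda\to\mathbb{N}^k$ is a functor satisfying the factorisation property: if $\lambda$ is a morphism with $d(\lambda)=m+n$, then there are unique morphisms $\mu\in d^{-1}(m)$, $\nu\in d^{-1}(n)$ with $\lambda=\mu\nu$. Morphisms are called paths; objects (vertices) are identified with the paths of degree $0$; $r$ and $s$ denote codomain and domain; $\Lambda^n:=d^{-1}(n)$. For $\lambda$ with $d(\lambda)=n$ and $l\le m\le n$ in $\mathbb{N}^k$, $\lambda(l,m)$ denotes the unique path with $d(\lambda(l,m))=m-l$ such that $\lambda=\lambda(0,l)\lambda(l,m)\lambda(m,n)$. For $p\in\mathbb{N}^k$, the dual $p\Lambda$ is defined as follows: its set of paths is $\{\lambda\in\Lambda: d(\lambda)\ge p\}$, its vertices are the elements of $\Lambda^p$, with range $r_p(\lambda):=\lambda(0,p)$, source $s_p(\lambda):=\lambda(d(\lambda)-p,d(\lambda))$, composition $\lambda\circ_p\mu:=\lambda\,\mu(p,d(\mu))$ $(=\lambda(0,d(\lambda)-p)\mu)$ whenever $s_p(\lambda)=r_p(\mu)$, and degree $d_p(\lambda):=d(\lambda)-p$. *)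

theory Defs
  imports Main "HOL-Library.Countable_Set" "HOL-Library.Function_Algebras"
begin

text \<open>Small categories in the arrows-only presentation: a set of morphisms M,
range (codomain) r, source (domain) s, and a composition c (only meaningful on
composable pairs).  Objects are the identity morphisms, i.e. the x with r x = x.
Degrees live in N^k, represented as functions 'k \<Rightarrow> nat for a finite type 'k
with CARD('k) = k; the order and the operations +, -, 0 are pointwise.\<close>

definition category :: "'a set \<Rightarrow> ('a \<Rightarrow> 'a) \<Rightarrow> ('a \<Rightarrow> 'a) \<Rightarrow> ('a \<Rightarrow> 'a \<Rightarrow> 'a) \<Rightarrow> bool" where
  "category M r s c \<longleftrightarrow>
     (\<forall>x\<in>M. r x \<in> M \<and> s x \<in> M) \<and>
     (\<forall>x\<in>M. r (r x) = r x \<and> s (r x) = r x \<and> r (s x) = s x \<and> s (s x) = s x) \<and>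
     (\<forall>x\<in>M. \<forall>y\<in>M. s x = r y \<longrightarrow> c x y \<in> M \<and> r (c x y) = r x \<and> s (c x y) = s y) \<and>
     (\<forall>x\<in>M. c (r x) x = x \<and> c x (s x) = x) \<and>
     (\<forall>x\<in>M. \<forall>y\<in>M. \<forall>z\<in>M. s x = r y \<and> s y = r z \<longrightarrow> c (c x y) z = c x (c y z))"

definition kgraph :: "'a set \<Rightarrow> ('a \<Rightarrow> 'a) \<Rightarrow> ('a \<Rightarrow> 'a) \<Rightarrow> ('a \<Rightarrow> 'a \<Rightarrow> 'a)
                      \<Rightarrow> ('a \<Rightarrow> ('k::finite \<Rightarrow> nat)) \<Rightarrow> bool" where
  "kgraph M r s c d \<longleftrightarrow>
     countable M \<and> category M r s c \<and>
     (\<forall>x\<in>M. d (r x) = 0) \<and>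
     (\<forall>x\<in>M. \<forall>y\<in>M. s x = r y \<longrightarrow> d (c x y) = d x + d y) \<and>
     (\<forall>la\<in>M. \<forall>m n. d la = m + n \<longrightarrow>
        (\<exists>!(mu, nu). mu \<in> M \<and> nu \<in> M \<and> d mu = m \<and> d nu = n \<and> s mu = r nu \<and> c mu nu = la))"

definition seg :: "'a set \<Rightarrow> ('a \<Rightarrow> 'a) \<Rightarrow> ('a \<Rightarrow> 'a) \<Rightarrow> ('a \<Rightarrow> 'a \<Rightarrow> 'a)
                   \<Rightarrow> ('a \<Rightarrow> ('k::finite \<Rightarrow> nat)) \<Rightarrow> 'a \<Rightarrow> ('k \<Rightarrow> nat) \<Rightarrow> ('k \<Rightarrow> nat) \<Rightarrow> 'a" where
  "seg M r s c d la l m = (THE nu. \<exists>al be. al \<in> M \<and> nu \<in> M \<and> be \<in> M \<and>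
        d al = l \<and> d nu = m - l \<and> d be = d la - m \<and>
        s al = r nu \<and> s nu = r be \<and> c (c al nu) be = la)"

definition dual_paths :: "'a set \<Rightarrow> ('a \<Rightarrow> ('k::finite \<Rightarrow> nat)) \<Rightarrow> ('k \<Rightarrow> nat) \<Rightarrow> 'a set" where
  "dual_paths M d p = {la \<in> M. p \<le> d la}"

definition dual_r :: "'a set \<Rightarrow> ('a \<Rightarrow> 'a) \<Rightarrow> ('a \<Rightarrow> 'a) \<Rightarrow> ('a \<Rightarrow> 'a \<Rightarrow> 'a)
                      \<Rightarrow> ('a \<Rightarrow> ('k::finite \<Rightarrow> nat)) \<Rightarrow> ('k \<Rightarrow> nat) \<Rightarrow> 'a \<Rightarrow> 'a" where
  "dual_r M r s c d p la = seg M r s c d la 0 p"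

definition dual_s :: "'a set \<Rightarrow> ('a \<Rightarrow> 'a) \<Rightarrow> ('a \<Rightarrow> 'a) \<Rightarrow> ('a \<Rightarrow> 'a \<Rightarrow> 'a)
                      \<Rightarrow> ('a \<Rightarrow> ('k::finite \<Rightarrow> nat)) \<Rightarrow> ('k \<Rightarrow> nat) \<Rightarrow> 'a \<Rightarrow> 'a" where
  "dual_s M r s c d p la = seg M r s c d la (d la - p) (d la)"

definition dual_comp :: "'a set \<Rightarrow> ('a \<Rightarrow> 'a) \<Rightarrow> ('a \<Rightarrow> 'a) \<Rightarrow> ('a \<Rightarrow> 'a \<Rightarrow> 'a)
                      \<Rightarrow> ('a \<Rightarrow> ('k::finite \<Rightarrow> nat)) \<Rightarrow> ('k \<Rightarrow> nat) \<Rightarrow> 'a \<Rightarrow> 'a \<Rightarrow> 'a" where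
  "dual_comp M r s c d p la mu = c la (seg M r s c d mu p (d mu))"

definition dual_d :: "('a \<Rightarrow> ('k::finite \<Rightarrow> nat)) \<Rightarrow> ('k \<Rightarrow> nat) \<Rightarrow> 'a \<Rightarrow> ('k \<Rightarrow> nat)" where
  "dual_d d p la = d la - p"

end

theory Submission
  imports Defs
begin

text \<open>Every path \<lambda> of p\<Lambda> factors in \<Lambda> as \<lambda> = r_p(\<lambda>) \<lambda>' and as \<lambda> = \<lambda>'' s_p(\<lambda>),
where r_p(\<lambda>) and s_p(\<lambda>) have degree p.  In these terms \<lambda> \<circ>_p \<mu> = \<lambda> \<mu>' = \<lambda>'' \<mu>, so the
category axioms of p\<Lambda> reduce to those of \<Lambda>, using that r_p only sees a left factor
of degree at least p and s_p only a right one.  For the factorisation property, a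
path \<lambda> with d(\<lambda>) - p = m + n factors in \<Lambda> as \<alpha> \<beta> \<gamma> with degrees m, p, n; then
(\<alpha>\<beta>, \<beta>\<gamma>) is a factorisation in p\<Lambda>.  It is the only one, because \<mu> \<circ>_p \<nu> = \<mu> \<nu>'
determines \<mu> and \<nu>' by unique factorisation in \<Lambda>, and then \<nu> = s_p(\<mu>) \<nu>'.\<close>

lemma le_add_diff_inverse_fun: "(p::'k \<Rightarrow> 'b::ordered_cancel_comm_monoid_diff) \<le> a \<Longrightarrow> p + (a - p) = a"
  by (simp add: fun_eq_iff le_fun_def ordered_cancel_comm_monoid_diff_class.add_diff_inverse)

lemma le_add_diff_inverse2_fun: "(p::'k \<Rightarrow> 'b::ordered_cancel_comm_monoid_diff) \<le> a \<Longrightarrow> (a - p) + p = a"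
  by (simp add: fun_eq_iff le_fun_def diff_add)

lemma le_add_right_fun: "(p::'k \<Rightarrow> 'b::ordered_cancel_comm_monoid_diff) \<le> a \<Longrightarrow> p \<le> a + b"
  by (simp add: le_fun_def add_increasing2)

lemma add_diff_assoc2_fun: "(p::'k \<Rightarrow> 'b::ordered_cancel_comm_monoid_diff) \<le> a \<Longrightarrow> a + b - p = (a - p) + b"
  by (simp add: fun_eq_iff le_fun_def ordered_cancel_comm_monoid_diff_class.diff_add_assoc2)

locale k_graph =
  fixes M :: "'a set" and r s :: "'a \<Rightarrow> 'a" and c :: "'a \<Rightarrow> 'a \<Rightarrow> 'a"
    and d :: "'a \<Rightarrow> ('k::finite \<Rightarrow> nat)"
  assumes kgraph: "kgraph M r s c d"
begin

lemma category: "category M r s c"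
  using kgraph by (simp add: kgraph_def)

lemma r_in: "x \<in> M \<Longrightarrow> r x \<in> M"
  and s_in: "x \<in> M \<Longrightarrow> s x \<in> M"
  and s_r: "x \<in> M \<Longrightarrow> s (r x) = r x"
  and r_s: "x \<in> M \<Longrightarrow> r (s x) = s x"
  and comp_in: "x \<in> M \<Longrightarrow> y \<in> M \<Longrightarrow> s x = r y \<Longrightarrow> c x y \<in> M"
  and r_comp: "x \<in> M \<Longrightarrow> y \<in> M \<Longrightarrow> s x = r y \<Longrightarrow> r (c x y) = r x"
  and s_comp: "x \<in> M \<Longrightarrow> y \<in> M \<Longrightarrow> s x = r y \<Longrightarrow> s (c x y) = s y"
  and comp_r_left: "x \<in> M \<Longrightarrow> c (r x) x = x"
  and comp_s_right: "x \<in> M \<Longrightarrow> c x (s x) = x"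
  using category by (simp_all add: category_def)

lemma assoc:
  "\<lbrakk>x \<in> M; y \<in> M; z \<in> M; s x = r y; s y = r z\<rbrakk> \<Longrightarrow> c (c x y) z = c x (c y z)"
  using category unfolding category_def by blast

lemma d_r: "x \<in> M \<Longrightarrow> d (r x) = 0"
  using kgraph by (simp add: kgraph_def)

lemma d_comp: "x \<in> M \<Longrightarrow> y \<in> M \<Longrightarrow> s x = r y \<Longrightarrow> d (c x y) = d x + d y"
  using kgraph by (simp add: kgraph_def)

lemma unique_factorisation:
  "x \<in> M \<Longrightarrow> d x = m + n \<Longrightarrow>
    \<exists>!(\<mu>, \<nu>). \<mu> \<in> M \<and> \<nu> \<in> M \<and> d \<mu> = m \<and> d \<nu> = n \<and> s \<mu> = r \<nu> \<and> c \<mu> \<nu> = x"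
  using kgraph unfolding kgraph_def by blast

lemma factorisation:
  assumes "x \<in> M" "d x = m + n"
  obtains \<mu> \<nu> where "\<mu> \<in> M" "\<nu> \<in> M" "d \<mu> = m" "d \<nu> = n" "s \<mu> = r \<nu>" "c \<mu> \<nu> = x"
  using unique_factorisation[OF assms] by blast

lemma factorisation_eqI:
  assumes "\<mu> \<in> M" "\<nu> \<in> M" "\<mu>' \<in> M" "\<nu>' \<in> M" "s \<mu> = r \<nu>" "s \<mu>' = r \<nu>'"
    and "c \<mu> \<nu> = c \<mu>' \<nu>'" "d \<mu> = d \<mu>'"
  shows "\<mu> = \<mu>'" "\<nu> = \<nu>'"
proof -
  define F where "F = (\<lambda>(\<mu>'', \<nu>''). \<mu>'' \<in> M \<and> \<nu>'' \<in> M \<and> d \<mu>'' = d \<mu> \<and> d \<nu>'' = d \<nu> \<and>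
    s \<mu>'' = r \<nu>'' \<and> c \<mu>'' \<nu>'' = c \<mu> \<nu>)"
  have d\<mu>\<nu>: "d (c \<mu> \<nu>) = d \<mu> + d \<nu>" "d (c \<mu>' \<nu>') = d \<mu>' + d \<nu>'"
    using assms(1-6) d_comp by simp_all
  then have "d \<nu>' = d \<nu>"
    using assms(7,8) by (metis add_left_cancel)
  have "\<exists>!z. F z"
    unfolding F_def using unique_factorisation[OF comp_in d\<mu>\<nu>(1)] assms by simp
  moreover have "F (\<mu>, \<nu>)" "F (\<mu>', \<nu>')"
    using assms \<open>d \<nu>' = d \<nu>\<close> by (simp_all add: F_def)
  ultimately have "(\<mu>, \<nu>) = (\<mu>', \<nu>')"
    by blast
  then show "\<mu> = \<mu>'" "\<nu> = \<nu>'"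
    by simp_all
qed

abbreviation "seg\<^sub>\<Lambda> \<equiv> seg M r s c d"

lemma factorisation3_eqI:
  assumes "\<alpha> \<in> M" "\<nu> \<in> M" "\<beta> \<in> M" "s \<alpha> = r \<nu>" "s \<nu> = r \<beta>"
    and "\<alpha>' \<in> M" "\<nu>' \<in> M" "\<beta>' \<in> M" "s \<alpha>' = r \<nu>'" "s \<nu>' = r \<beta>'"
    and "c (c \<alpha> \<nu>) \<beta> = c (c \<alpha>' \<nu>') \<beta>'" "d \<alpha> = d \<alpha>'" "d \<nu> = d \<nu>'"
  shows "\<nu> = \<nu>'"
proof -
  have "c \<alpha> \<nu> = c \<alpha>' \<nu>'"
    using assms by (intro factorisation_eqI(1)[of "c \<alpha> \<nu>" \<beta> "c \<alpha>' \<nu>'" \<beta>'])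
      (simp_all add: comp_in s_comp d_comp)
  then show ?thesis
    using assms by (intro factorisation_eqI(2)[of \<alpha> \<nu> \<alpha>' \<nu>']) simp_all
qed

lemma seg_middle:
  assumes "\<alpha> \<in> M" "\<nu> \<in> M" "\<beta> \<in> M" "s \<alpha> = r \<nu>" "s \<nu> = r \<beta>"
  shows "seg\<^sub>\<Lambda> (c (c \<alpha> \<nu>) \<beta>) (d \<alpha>) (d \<alpha> + d \<nu>) = \<nu>"
proof -
  have "d (c (c \<alpha> \<nu>) \<beta>) = d \<alpha> + d \<nu> + d \<beta>"
    using assms by (simp add: comp_in s_comp d_comp)
  with assms show ?thesis
    unfolding seg_def
  proof (intro the_equality)
    fix \<nu>'
    assume "\<exists>\<alpha>' \<beta>'. \<alpha>' \<in> M \<and> \<nu>' \<in> M \<and> \<beta>' \<in> M \<and> d \<alpha>' = d \<alpha> \<and> d \<nu>' = d \<alpha> + d \<nu> - d \<alpha> \<and>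
      d \<beta>' = d (c (c \<alpha> \<nu>) \<beta>) - (d \<alpha> + d \<nu>) \<and> s \<alpha>' = r \<nu>' \<and> s \<nu>' = r \<beta>' \<and>
      c (c \<alpha>' \<nu>') \<beta>' = c (c \<alpha> \<nu>) \<beta>"
    with assms show "\<nu>' = \<nu>"
      by (metis add_diff_cancel_left' factorisation3_eqI)
  qed (intro exI[of _ \<alpha>] exI[of _ \<beta>], simp)
qed

lemma seg_prefix: "a \<in> M \<Longrightarrow> b \<in> M \<Longrightarrow> s a = r b \<Longrightarrow> seg\<^sub>\<Lambda> (c a b) 0 (d a) = a"
  using seg_middle[of "r a" a b] by (simp add: r_in s_r comp_r_left d_r)

lemma seg_suffix:
  assumes "a \<in> M" "b \<in> M" "s a = r b"
  shows "seg\<^sub>\<Lambda> (c a b) (d a) (d (c a b)) = b"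
proof -
  have "c (c a b) (s b) = c a b"
    using assms comp_s_right[OF comp_in] s_comp by metis
  then show ?thesis
    using seg_middle[of a b "s b"] assms by (simp add: s_in r_s d_comp)
qed

context
  fixes p :: "'k \<Rightarrow> nat"
begin

abbreviation "M\<^sub>p \<equiv> dual_paths M d p"
abbreviation "r\<^sub>p \<equiv> dual_r M r s c d p"
abbreviation "s\<^sub>p \<equiv> dual_s M r s c d p"
abbreviation "c\<^sub>p \<equiv> dual_comp M r s c d p"
abbreviation "d\<^sub>p \<equiv> dual_d d p"
abbreviation "tail x \<equiv> seg\<^sub>\<Lambda> x p (d x)"

lemma dual_paths_iff: "x \<in> M\<^sub>p \<longleftrightarrow> x \<in> M \<and> p \<le> d x"
  by (simp add: dual_paths_def)

lemma d_eq_dual_d_add: "x \<in> M\<^sub>p \<Longrightarrow> d x = d\<^sub>p x + p"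
  by (simp add: dual_paths_iff dual_d_def le_add_diff_inverse2_fun)

lemma dual_r_comp: "a \<in> M \<Longrightarrow> b \<in> M \<Longrightarrow> s a = r b \<Longrightarrow> d a = p \<Longrightarrow> r\<^sub>p (c a b) = a"
  unfolding dual_r_def using seg_prefix by blast

lemma tail_comp: "a \<in> M \<Longrightarrow> b \<in> M \<Longrightarrow> s a = r b \<Longrightarrow> d a = p \<Longrightarrow> tail (c a b) = b"
  using seg_suffix by blast

lemma dual_s_comp: "a \<in> M \<Longrightarrow> b \<in> M \<Longrightarrow> s a = r b \<Longrightarrow> d b = p \<Longrightarrow> s\<^sub>p (c a b) = b"
  unfolding dual_s_def using seg_suffix d_comp by force

lemma head_tail_factorisation:
  assumes "x \<in> M" "p \<le> d x"
  shows "r\<^sub>p x \<in> M" "d (r\<^sub>p x) = p" "tail x \<in> M" "d (tail x) = d x - p"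
    "s (r\<^sub>p x) = r (tail x)" "c (r\<^sub>p x) (tail x) = x"
proof -
  obtain a b where ab: "a \<in> M" "b \<in> M" "d a = p" "d b = d x - p" "s a = r b" "c a b = x"
    using factorisation[OF assms(1) le_add_diff_inverse_fun[OF assms(2), symmetric]] .
  then have "r\<^sub>p x = a" "tail x = b"
    using dual_r_comp tail_comp by blast+
  with ab show "r\<^sub>p x \<in> M" "d (r\<^sub>p x) = p" "tail x \<in> M" "d (tail x) = d x - p"
    "s (r\<^sub>p x) = r (tail x)" "c (r\<^sub>p x) (tail x) = x"
    by simp_all
qed

lemma dual_s_factorisation:
  assumes "x \<in> M" "p \<le> d x"
  obtains a where "a \<in> M" "s\<^sub>p x \<in> M" "d (s\<^sub>p x) = p" "s a = r (s\<^sub>p x)" "c a (s\<^sub>p x) = x"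
proof -
  obtain a b where ab: "a \<in> M" "b \<in> M" "d b = p" "s a = r b" "c a b = x"
    using factorisation[OF assms(1) le_add_diff_inverse2_fun[OF assms(2), symmetric]] .
  then have "s\<^sub>p x = b"
    using dual_s_comp by blast
  with ab that show thesis by simp
qed

lemma s_dual_s: "x \<in> M \<Longrightarrow> p \<le> d x \<Longrightarrow> s (s\<^sub>p x) = s x"
  by (metis dual_s_factorisation s_comp)

lemma dual_vertex:
  assumes "y \<in> M" "d y = p"
  shows "r\<^sub>p y = y" "s\<^sub>p y = y" "tail y = s y"
  using dual_r_comp[of y "s y"] dual_s_comp[of "r y" y] tail_comp[of y "s y"] assms
  by (simp_all add: r_in s_in s_r r_s comp_r_left comp_s_right)

lemma
  assumes "u \<in> M" "v \<in> M" "s u = r v" "p \<le> d u"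
  shows dual_r_comp_right: "r\<^sub>p (c u v) = r\<^sub>p u"
    and tail_comp_right: "tail (c u v) = c (tail u) v"
proof -
  note ht = head_tail_factorisation[OF assms(1,4)]
  have "s (tail u) = r v"
    using assms ht s_comp by metis
  then have "c u v = c (r\<^sub>p u) (c (tail u) v)" "s (r\<^sub>p u) = r (c (tail u) v)"
    using assms ht assoc r_comp by metis+
  with assms ht \<open>s (tail u) = r v\<close> show "r\<^sub>p (c u v) = r\<^sub>p u" "tail (c u v) = c (tail u) v"
    by (simp_all add: dual_r_comp tail_comp comp_in)
qed

lemma dual_s_comp_left:
  assumes "u \<in> M" "v \<in> M" "s u = r v" "p \<le> d v"
  shows "s\<^sub>p (c u v) = s\<^sub>p v"
proof -
  obtain a where a: "a \<in> M" "s\<^sub>p v \<in> M" "d (s\<^sub>p v) = p" "s a = r (s\<^sub>p v)" "c a (s\<^sub>p v) = v"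
    using dual_s_factorisation[OF assms(2,4)] .
  then have "s u = r a"
    using assms r_comp by metis
  with assms a have "c u v = c (c u a) (s\<^sub>p v)" "s (c u a) = r (s\<^sub>p v)"
    using assoc s_comp by metis+
  with assms a \<open>s u = r a\<close> show ?thesis
    by (simp add: dual_s_comp comp_in)
qed

lemma s_tail: "y \<in> M \<Longrightarrow> p \<le> d y \<Longrightarrow> s (tail y) = s y"
  by (metis head_tail_factorisation s_comp)

lemma s_eq_r_tail:
  assumes "x \<in> M\<^sub>p" "y \<in> M\<^sub>p" "s\<^sub>p x = r\<^sub>p y"
  shows "s x = r (tail y)"
  using assms head_tail_factorisation s_dual_s by (metis dual_paths_iff)

lemma dual_comp_via_prefix:
  assumes "x \<in> M\<^sub>p" "y \<in> M\<^sub>p" "s\<^sub>p x = r\<^sub>p y"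
  obtains a where "a \<in> M" "s a = r y" "c\<^sub>p x y = c a y"
proof -
  have x: "x \<in> M" "p \<le> d x" and y: "y \<in> M" "p \<le> d y"
    using assms dual_paths_iff by auto
  obtain a where a: "a \<in> M" "s a = r (s\<^sub>p x)" "c a (s\<^sub>p x) = x" "s\<^sub>p x \<in> M"
    using dual_s_factorisation[OF x] by metis
  note ht = head_tail_factorisation[OF y]
  have "x = c a (r\<^sub>p y)"
    using a(3) assms(3) by simp
  then have "c\<^sub>p x y = c a (c (r\<^sub>p y) (tail y))"
    using a(1,2,4) assms(3) ht by (simp add: dual_comp_def assoc)
  moreover have "s a = r y"
    using a assms(3) ht r_comp by metis
  ultimately show thesis
    using that a ht by simp
qed

lemma
  assumes "x \<in> M\<^sub>p" "y \<in> M\<^sub>p" "s\<^sub>p x = r\<^sub>p y"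
  shows dual_comp_in: "c\<^sub>p x y \<in> M\<^sub>p"
    and d_dual_comp: "d\<^sub>p (c\<^sub>p x y) = d\<^sub>p x + d\<^sub>p y"
    and dual_r_dual_comp: "r\<^sub>p (c\<^sub>p x y) = r\<^sub>p x"
    and dual_s_dual_comp: "s\<^sub>p (c\<^sub>p x y) = s\<^sub>p y"
proof -
  have x: "x \<in> M" "p \<le> d x" and y: "y \<in> M" "p \<le> d y"
    using assms dual_paths_iff by auto
  note ht = head_tail_factorisation[OF y]
  have sx: "s x = r (tail y)"
    using s_eq_r_tail[OF assms] .
  have "d (c\<^sub>p x y) = d x + (d y - p)"
    using x ht sx by (simp add: dual_comp_def d_comp)
  with x ht sx show "c\<^sub>p x y \<in> M\<^sub>p" "d\<^sub>p (c\<^sub>p x y) = d\<^sub>p x + d\<^sub>p y"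
    by (simp_all add: dual_paths_iff dual_d_def dual_comp_def comp_in le_add_right_fun
        add_diff_assoc2_fun)
  show "r\<^sub>p (c\<^sub>p x y) = r\<^sub>p x"
    using x ht sx by (simp add: dual_comp_def dual_r_comp_right)
  obtain a where "a \<in> M" "s a = r y" "c\<^sub>p x y = c a y"
    using dual_comp_via_prefix[OF assms] .
  with y show "s\<^sub>p (c\<^sub>p x y) = s\<^sub>p y"
    by (simp add: dual_s_comp_left)
qed

lemma dual_assoc:
  assumes "x \<in> M\<^sub>p" "y \<in> M\<^sub>p" "z \<in> M\<^sub>p" "s\<^sub>p x = r\<^sub>p y" "s\<^sub>p y = r\<^sub>p z"
  shows "c\<^sub>p (c\<^sub>p x y) z = c\<^sub>p x (c\<^sub>p y z)"
proof -
  have x: "x \<in> M" and y: "y \<in> M" "p \<le> d y" and z: "z \<in> M" "p \<le> d z"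
    using assms dual_paths_iff by auto
  have sx: "s x = r (tail y)" and sy: "s y = r (tail z)"
    using s_eq_r_tail assms by blast+
  have "c\<^sub>p (c\<^sub>p x y) z = c x (c (tail y) (tail z))"
    using x y z sx sy head_tail_factorisation(3) by (simp add: dual_comp_def assoc s_tail)
  also have "c (tail y) (tail z) = tail (c y (tail z))"
    using y z sy head_tail_factorisation(3) by (simp add: tail_comp_right)
  finally show ?thesis
    by (simp add: dual_comp_def)
qed

lemma dual_category: "category M\<^sub>p r\<^sub>p s\<^sub>p c\<^sub>p"
  unfolding category_def
proof (intro conjI ballI impI)
  fix x assume "x \<in> M\<^sub>p"
  then have x: "x \<in> M" "p \<le> d x"
    by (simp_all add: dual_paths_iff)
  have s: "s\<^sub>p x \<in> M" "d (s\<^sub>p x) = p"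
    using dual_s_factorisation[OF x] by metis+
  note r = head_tail_factorisation[OF x]
  show "r\<^sub>p x \<in> M\<^sub>p" "s\<^sub>p x \<in> M\<^sub>p"
    using r s by (simp_all add: dual_paths_iff)
  show "r\<^sub>p (r\<^sub>p x) = r\<^sub>p x" "s\<^sub>p (r\<^sub>p x) = r\<^sub>p x" "r\<^sub>p (s\<^sub>p x) = s\<^sub>p x" "s\<^sub>p (s\<^sub>p x) = s\<^sub>p x"
    using r s dual_vertex by simp_all
  show "c\<^sub>p (r\<^sub>p x) x = x"
    using r by (simp add: dual_comp_def)
  have "tail (s\<^sub>p x) = s x"
    using s x dual_vertex(3) s_dual_s by metis
  then show "c\<^sub>p x (s\<^sub>p x) = x"
    using x by (simp add: dual_comp_def comp_s_right)
next
  fix x y assume "x \<in> M\<^sub>p" "y \<in> M\<^sub>p" "s\<^sub>p x = r\<^sub>p y"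
  then show "c\<^sub>p x y \<in> M\<^sub>p" "r\<^sub>p (c\<^sub>p x y) = r\<^sub>p x" "s\<^sub>p (c\<^sub>p x y) = s\<^sub>p y"
    by (simp_all add: dual_comp_in dual_r_dual_comp dual_s_dual_comp)
next
  fix x y z assume "x \<in> M\<^sub>p" "y \<in> M\<^sub>p" "z \<in> M\<^sub>p" "s\<^sub>p x = r\<^sub>p y \<and> s\<^sub>p y = r\<^sub>p z"
  then show "c\<^sub>p (c\<^sub>p x y) z = c\<^sub>p x (c\<^sub>p y z)"
    by (simp add: dual_assoc)
qed

lemma dual_factorisation_eqI:
  assumes "\<mu> \<in> M\<^sub>p" "\<nu> \<in> M\<^sub>p" "\<mu>' \<in> M\<^sub>p" "\<nu>' \<in> M\<^sub>p" "s\<^sub>p \<mu> = r\<^sub>p \<nu>" "s\<^sub>p \<mu>' = r\<^sub>p \<nu>'"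
    and "c\<^sub>p \<mu> \<nu> = c\<^sub>p \<mu>' \<nu>'" "d \<mu> = d \<mu>'"
  shows "\<mu> = \<mu>'" "\<nu> = \<nu>'"
proof -
  have \<mu>: "\<mu> \<in> M" "\<mu>' \<in> M" and \<nu>: "\<nu> \<in> M" "p \<le> d \<nu>" and \<nu>': "\<nu>' \<in> M" "p \<le> d \<nu>'"
    using assms dual_paths_iff by auto
  have "s \<mu> = r (tail \<nu>)" "s \<mu>' = r (tail \<nu>')"
    using assms s_eq_r_tail by blast+
  moreover have "c \<mu> (tail \<nu>) = c \<mu>' (tail \<nu>')"
    using assms(7) by (simp add: dual_comp_def)
  ultimately have "\<mu> = \<mu>'" "tail \<nu> = tail \<nu>'"
    using factorisation_eqI \<mu> head_tail_factorisation(3)[OF \<nu>] head_tail_factorisation(3)[OF \<nu>'] assms(8)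
    by blast+
  moreover have "\<nu> = c (s\<^sub>p \<mu>) (tail \<nu>)" "\<nu>' = c (s\<^sub>p \<mu>') (tail \<nu>')"
    using assms(5,6) head_tail_factorisation(6)[OF \<nu>] head_tail_factorisation(6)[OF \<nu>'] by simp_all
  ultimately show "\<mu> = \<mu>'" "\<nu> = \<nu>'"
    by simp_all
qed

lemma dual_factorisation_exists:
  assumes "x \<in> M\<^sub>p" "d\<^sub>p x = m + n"
  obtains \<mu> \<nu> where "\<mu> \<in> M\<^sub>p" "\<nu> \<in> M\<^sub>p" "d\<^sub>p \<mu> = m" "d\<^sub>p \<nu> = n" "s\<^sub>p \<mu> = r\<^sub>p \<nu>" "c\<^sub>p \<mu> \<nu> = x"
proof -
  have "x \<in> M" "d x = (m + p) + n"
    using assms d_eq_dual_d_add[OF assms(1)] by (simp_all add: dual_paths_iff ac_simps)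
  then obtain \<mu> \<gamma> where \<mu>\<gamma>: "\<mu> \<in> M" "\<gamma> \<in> M" "d \<mu> = m + p" "d \<gamma> = n" "s \<mu> = r \<gamma>" "c \<mu> \<gamma> = x"
    by (rule factorisation)
  then obtain \<alpha> \<beta> where \<alpha>\<beta>: "\<alpha> \<in> M" "\<beta> \<in> M" "d \<alpha> = m" "d \<beta> = p" "s \<alpha> = r \<beta>" "c \<alpha> \<beta> = \<mu>"
    by (metis factorisation)
  have "s \<beta> = r \<gamma>"
    using \<alpha>\<beta> \<mu>\<gamma> s_comp by metis
  then have "c \<beta> \<gamma> \<in> M\<^sub>p" "d\<^sub>p (c \<beta> \<gamma>) = n" "r\<^sub>p (c \<beta> \<gamma>) = \<beta>" "tail (c \<beta> \<gamma>) = \<gamma>"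
    using \<alpha>\<beta>(2,4) \<mu>\<gamma>(2,4) tail_comp[of \<beta> \<gamma>]
    by (simp_all add: dual_paths_iff dual_d_def comp_in d_comp dual_r_comp le_add_right_fun)
  moreover have "\<mu> \<in> M\<^sub>p" "d\<^sub>p \<mu> = m" "s\<^sub>p \<mu> = \<beta>"
    using \<mu>\<gamma>(1,3) dual_s_comp[OF \<alpha>\<beta>(1,2,5,4)] \<alpha>\<beta>(6)
    by (simp_all add: dual_paths_iff dual_d_def le_fun_def)
  ultimately show thesis
    using that[of \<mu> "c \<beta> \<gamma>"] \<mu>\<gamma>(6) by (simp add: dual_comp_def)
qed

lemma dual_unique_factorisation:
  assumes "x \<in> M\<^sub>p" "d\<^sub>p x = m + n"
  shows "\<exists>!(\<mu>, \<nu>). \<mu> \<in> M\<^sub>p \<and> \<nu> \<in> M\<^sub>p \<and> d\<^sub>p \<mu> = m \<and> d\<^sub>p \<nu> = n \<and> s\<^sub>p \<mu> = r\<^sub>p \<nu> \<and> c\<^sub>p \<mu> \<nu> = x"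
proof -
  obtain \<mu> \<nu> where \<mu>\<nu>: "\<mu> \<in> M\<^sub>p" "\<nu> \<in> M\<^sub>p" "d\<^sub>p \<mu> = m" "d\<^sub>p \<nu> = n" "s\<^sub>p \<mu> = r\<^sub>p \<nu>" "c\<^sub>p \<mu> \<nu> = x"
    using dual_factorisation_exists[OF assms] .
  show ?thesis
  proof (rule ex1I[of _ "(\<mu>, \<nu>)"])
    fix z
    assume "case z of (\<mu>', \<nu>') \<Rightarrow> \<mu>' \<in> M\<^sub>p \<and> \<nu>' \<in> M\<^sub>p \<and> d\<^sub>p \<mu>' = m \<and> d\<^sub>p \<nu>' = n \<and>
      s\<^sub>p \<mu>' = r\<^sub>p \<nu>' \<and> c\<^sub>p \<mu>' \<nu>' = x"
    then obtain \<mu>' \<nu>' where z: "z = (\<mu>', \<nu>')" "\<mu>' \<in> M\<^sub>p" "\<nu>' \<in> M\<^sub>p" "d\<^sub>p \<mu>' = m"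
      "s\<^sub>p \<mu>' = r\<^sub>p \<nu>'" "c\<^sub>p \<mu>' \<nu>' = x"
      by auto
    have "d \<mu>' = d \<mu>"
      using z(2,4) \<mu>\<nu>(1,3) by (simp add: d_eq_dual_d_add)
    then show "z = (\<mu>, \<nu>)"
      using dual_factorisation_eqI[OF z(2,3) \<mu>\<nu>(1,2) z(5) \<mu>\<nu>(5)] z(1,6) \<mu>\<nu>(6) by simp
  qed (use \<mu>\<nu> in simp)
qed

lemma kgraph_dual: "kgraph M\<^sub>p r\<^sub>p s\<^sub>p c\<^sub>p d\<^sub>p"
  unfolding kgraph_def
proof (intro conjI ballI allI impI)
  have "countable M"
    using kgraph by (simp add: kgraph_def)
  then show "countable M\<^sub>p"
    by (rule countable_subset[rotated]) (auto simp: dual_paths_iff)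
  show "category M\<^sub>p r\<^sub>p s\<^sub>p c\<^sub>p"
    by (rule dual_category)
next
  fix x assume "x \<in> M\<^sub>p"
  then show "d\<^sub>p (r\<^sub>p x) = 0"
    using head_tail_factorisation(2) by (simp add: dual_paths_iff dual_d_def)
next
  fix x y assume "x \<in> M\<^sub>p" "y \<in> M\<^sub>p" "s\<^sub>p x = r\<^sub>p y"
  then show "d\<^sub>p (c\<^sub>p x y) = d\<^sub>p x + d\<^sub>p y"
    by (rule d_dual_comp)
next
  fix x m n assume "x \<in> M\<^sub>p" "d\<^sub>p x = m + n"
  then show "\<exists>!(\<mu>, \<nu>). \<mu> \<in> M\<^sub>p \<and> \<nu> \<in> M\<^sub>p \<and> d\<^sub>p \<mu> = m \<and> d\<^sub>p \<nu> = n \<and> s\<^sub>p \<mu> = r\<^sub>p \<nu> \<and> c\<^sub>p \<mu> \<nu> = x"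
    by (rule dual_unique_factorisation)
qed

end

end

theorem proposition3p2:
  fixes M :: "'a set" and r s :: "'a \<Rightarrow> 'a" and c :: "'a \<Rightarrow> 'a \<Rightarrow> 'a"
    and d :: "'a \<Rightarrow> ('k::finite \<Rightarrow> nat)" and p :: "'k \<Rightarrow> nat"
  assumes "kgraph M r s c d"
  shows "kgraph (dual_paths M d p) (dual_r M r s c d p) (dual_s M r s c d p)
                (dual_comp M r s c d p) (dual_d d p)"
proof -
  interpret k_graph M r s c d
    using assms by unfold_locales
  show ?thesis
    by (rule kgraph_dual)
qed

end
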